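(* Let $\beta\in\mathbb C\setminus\mathbb Z$ and let $Q_+,\widetilde Q_+,Q_-,\widetilde Q_-$ be entire functions such that each of the pairs $(Q_+,Q_-)$, $(\widetilde Q_+,Q_-)$ and $(Q_+,\widetilde Q_-)$ satisfies the QQ system with momentum $\beta$. Then $Q_+=\widetilde Q_+$ and $Q_-=\widetilde Q_-$.
   Context: A pair $(Q_+,Q_-)$ of entire functions satisfies the QQ system with momentum $\beta$ if for all $E\in\mathbb C$: $e^{i\frac{\beta\pi}2}Q_+(iE)Q_-(-iE)-e^{-i\frac{\beta\pi}2}Q_+(-iE)Q_-(iE)=i\,e^{\frac{E\pi}4}$. *)

theory Defs
  imports "HOL-Complex_Analysis.Complex_Analysis"
begin

definition QQ_system :: "complex \<Rightarrow> (complex \<Rightarrow> complex) \<Rightarrow> (complex \<Rightarrow> complex) \<Rightarrow> bool" where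
  "QQ_system \<beta> Qp Qm \<longleftrightarrow>
     (\<forall>E::complex.
        exp (\<i> * \<beta> * of_real pi / 2) * Qp (\<i> * E) * Qm (- \<i> * E)
      - exp (- \<i> * \<beta> * of_real pi / 2) * Qp (- \<i> * E) * Qm (\<i> * E)
      = \<i> * exp (E * of_real pi / 4))"

end

theory Submission
  imports Defs
begin

text \<open>The QQ system says that the quantum Wronskian
  \<open>W(f,g)(z) = a f(z) g(-z) - a' f(-z) g(z)\<close>, with \<open>a = exp(i\<pi>\<beta>/2)\<close> and \<open>a' = 1/a\<close>, is the fixed
  function \<open>i exp(-i\<pi>z/4)\<close>; at \<open>z = 0\<close> this forces \<open>f(0) \<noteq> 0\<close> and \<open>g(0) \<noteq> 0\<close>. Since \<open>W\<close> is
  bilinear and \<open>W(g,f)(z) = W(f,g)(-z)\<close>, both claims reduce to: \<open>W(D,Q) = 0\<close> and \<open>Q(0) \<noteq> 0\<close>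
  imply \<open>D = 0\<close>. For \<open>F(z) = D(z) Q(-z)\<close> the hypothesis reads \<open>a F(z) = a' F(-z)\<close>; applying
  it twice gives \<open>a\<^sup>2 F = a'\<^sup>2 F\<close>, and \<open>a\<^sup>2 \<noteq> a'\<^sup>2\<close> because \<open>\<beta> \<notin> \<int>\<close>. So \<open>F = 0\<close>, hence \<open>D\<close> vanishes
  near \<open>0\<close> and, by analytic continuation, everywhere.\<close>

lemma exp_i_pi_neq_exp_neg_i_pi:
  fixes \<beta> :: complex
  assumes "\<beta> \<notin> \<int>"
  shows "exp (\<i> * \<beta> * pi) \<noteq> exp (- \<i> * \<beta> * pi)"
proof
  assume "exp (\<i> * \<beta> * pi) = exp (- \<i> * \<beta> * pi)"
  then obtain n :: int where "\<i> * \<beta> * pi = - \<i> * \<beta> * pi + (of_int (2 * n) * pi) * \<i>"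
    by (auto simp: exp_eq)
  then have "\<beta> = of_int n"
    by (simp add: algebra_simps)
  with assms show False
    by simp
qed

lemma reflection_eigenfunction_eq_0:
  fixes F :: "'a::ab_group_add \<Rightarrow> 'b::idom"
  assumes "a\<^sup>2 \<noteq> b\<^sup>2" and "\<And>z. a * F z = b * F (- z)"
  shows "F z = 0"
proof -
  have "a\<^sup>2 * F z = a * (b * F (- z))"
    using assms(2) by (simp add: power2_eq_square mult.assoc)
  also have "\<dots> = b\<^sup>2 * F z"
    using assms(2)[of "- z"] by (simp add: power2_eq_square algebra_simps)
  finally show ?thesis
    using assms(1) by simp
qed

lemma holomorphic_mult_eq_0_imp_eq_0:
  assumes "f holomorphic_on S" and "continuous_on S g" and "open S" and "connected S"
    and "\<And>z. z \<in> S \<Longrightarrow> f z * g z = 0"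
    and "w \<in> S" and "g w \<noteq> 0" and "z \<in> S"
  shows "f z = 0"
proof -
  let ?U = "S \<inter> g -` (- {0})"
  have "open ?U"
    using assms(2,3) by (intro continuous_open_preimage) auto
  moreover have "?U \<noteq> {}"
    using assms(6,7) by blast
  moreover have "f u = 0" if "u \<in> ?U" for u
    using assms(5) that by force
  ultimately show ?thesis
    using analytic_continuation_open[of ?U S f "\<lambda>_. 0"] assms(1,3,4,8) by auto
qed

definition qq_wronskian ::
    "complex \<Rightarrow> (complex \<Rightarrow> complex) \<Rightarrow> (complex \<Rightarrow> complex) \<Rightarrow> complex \<Rightarrow> complex" where
  "qq_wronskian \<beta> f g z =
     exp (\<i> * \<beta> * of_real pi / 2) * f z * g (- z)
   - exp (- \<i> * \<beta> * of_real pi / 2) * f (- z) * g z"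

lemma QQ_system_imp_qq_wronskian:
  assumes "QQ_system \<beta> f g"
  shows "qq_wronskian \<beta> f g z = \<i> * exp (- \<i> * z * of_real pi / 4)"
  using assms[unfolded QQ_system_def, rule_format, of "- \<i> * z"]
  by (simp add: qq_wronskian_def)

lemma QQ_system_nonzero_at_0:
  assumes "QQ_system \<beta> f g"
  shows "f 0 \<noteq> 0" and "g 0 \<noteq> 0"
  using assms[unfolded QQ_system_def, rule_format, of 0] by auto

lemma qq_wronskian_commute: "qq_wronskian \<beta> g f z = qq_wronskian \<beta> f g (- z)"
  by (simp add: qq_wronskian_def algebra_simps)

lemma qq_wronskian_diff_left:
  "qq_wronskian \<beta> (\<lambda>z. f z - f' z) g z = qq_wronskian \<beta> f g z - qq_wronskian \<beta> f' g z"
  by (simp add: qq_wronskian_def algebra_simps)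

lemma qq_wronskian_diff_right:
  "qq_wronskian \<beta> f (\<lambda>z. g z - g' z) z = qq_wronskian \<beta> f g z - qq_wronskian \<beta> f g' z"
  by (simp add: qq_wronskian_def algebra_simps)

lemma qq_wronskian_eq_0_imp_eq_0:
  assumes "\<beta> \<notin> \<int>" and "f holomorphic_on UNIV" and "g holomorphic_on UNIV" and "g 0 \<noteq> 0"
    and "\<And>z. qq_wronskian \<beta> f g z = 0"
  shows "f = (\<lambda>_. 0)"
proof -
  let ?a = "exp (\<i> * \<beta> * of_real pi / 2)" and ?a' = "exp (- \<i> * \<beta> * of_real pi / 2)"
  have "?a\<^sup>2 = exp (\<i> * \<beta> * pi)" and "?a'\<^sup>2 = exp (- \<i> * \<beta> * pi)"
    unfolding exp_double[symmetric] by simp_all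
  then have "?a\<^sup>2 \<noteq> ?a'\<^sup>2"
    using exp_i_pi_neq_exp_neg_i_pi[OF assms(1)] by simp
  moreover have "?a * (f z * g (- z)) = ?a' * (f (- z) * g (- (- z)))" for z
    using assms(5)[of z] unfolding qq_wronskian_def by (simp add: mult_ac)
  ultimately have product_eq_0: "f z * g (- z) = 0" for z
    by (rule reflection_eigenfunction_eq_0[where F = "\<lambda>z. f z * g (- z)"])
  have "continuous_on UNIV (\<lambda>z. g (- z))"
    using holomorphic_on_imp_continuous_on[OF assms(3)]
    by (rule continuous_on_compose2[OF _ continuous_on_minus[OF continuous_on_id]]) auto
  then have "f z = 0" for z
    by (rule holomorphic_mult_eq_0_imp_eq_0
          [OF assms(2) _ open_UNIV connected_UNIV _ UNIV_I _ UNIV_I, where w = 0])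
      (simp_all add: product_eq_0 assms(4))
  then show ?thesis
    by blast
qed

theorem lemma6p2:
  fixes \<beta> :: complex
    and Qp Qpt Qm Qmt :: "complex \<Rightarrow> complex"
  assumes "\<beta> \<notin> \<int>"
    and "Qp holomorphic_on UNIV" and "Qpt holomorphic_on UNIV"
    and "Qm holomorphic_on UNIV" and "Qmt holomorphic_on UNIV"
    and "QQ_system \<beta> Qp Qm"
    and "QQ_system \<beta> Qpt Qm"
    and "QQ_system \<beta> Qp Qmt"
  shows "Qp = Qpt \<and> Qm = Qmt"
proof -
  have "qq_wronskian \<beta> (\<lambda>z. Qp z - Qpt z) Qm z = 0" for z
    by (simp add: qq_wronskian_diff_left QQ_system_imp_qq_wronskian assms(6,7))
  then have "(\<lambda>z. Qp z - Qpt z) = (\<lambda>_. 0)"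
    by (rule qq_wronskian_eq_0_imp_eq_0[OF assms(1) holomorphic_on_diff[OF assms(2,3)] assms(4)
          QQ_system_nonzero_at_0(2)[OF assms(6)]])
  moreover have "qq_wronskian \<beta> (\<lambda>z. Qm z - Qmt z) Qp z = 0" for z
    unfolding qq_wronskian_commute[of \<beta> "\<lambda>z. Qm z - Qmt z" Qp]
    by (simp add: qq_wronskian_diff_right QQ_system_imp_qq_wronskian assms(6,8))
  then have "(\<lambda>z. Qm z - Qmt z) = (\<lambda>_. 0)"
    by (rule qq_wronskian_eq_0_imp_eq_0[OF assms(1) holomorphic_on_diff[OF assms(4,5)] assms(2)
          QQ_system_nonzero_at_0(1)[OF assms(6)]])
  ultimately show ?thesis
    by (simp add: fun_eq_iff)
qed

end
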